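(* For every $c\in\mathbb{C}$, $r_{\mathrm{bif}}(c)\le\operatorname{dist}(c,\partial\mathcal{M})$, where $\operatorname{dist}$ is the Euclidean distance and $\mathcal{M}$ is the Mandelbrot set.
   Context: $f_c(z)=z^2+c$, extended to $\widehat{\mathbb{C}}$ by $f_c(\infty)=\infty$. $\mathcal{M}=\{c\in\mathbb{C}: f_c^{\circ n}(0)\not\to\infty\}$. For $c\in\mathbb{C}$, $r\ge0$, $G_{c,r}$ is the semigroup under composition generated by $\{f_{c'}:|c'-c|\le r\}$. A minimal set of a polynomial semigroup $G$ is a minimal element, with respect to inclusion, of the family of non-empty compact $L\subset\widehat{\mathbb{C}}$ with $g(L)\subset L$ for all $g\in G$; it is planar if $\infty\notin L$. The bifurcation radius $r_{\mathrm{bif}}(c)$ is the supremum of those $r\ge0$ for which $G_{c,r}$ has a planar minimal set (equivalently the infimum of those $r\ge0$ for which $G_{c,r}$ has no planar minimal set); by prior work this value is attained and $G_{c,r}$ has a planar minimal set iff $r\le r_{\mathrm{bif}}(c)$. *)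

theory Defs
  imports "HOL-Analysis.Analysis" "HOL-Library.Extended_Real"
begin

definition quad :: "complex \<Rightarrow> complex \<Rightarrow> complex" where
  "quad c z = z^2 + c"

definition mandelbrot :: "complex set" where
  "mandelbrot = {c. \<not> filterlim (\<lambda>n. (quad c ^^ n) 0) at_infinity sequentially}"

inductive_set gen_semigroup :: "('a \<Rightarrow> 'a) set \<Rightarrow> ('a \<Rightarrow> 'a) set"
  for F :: "('a \<Rightarrow> 'a) set" where
  gen: "f \<in> F \<Longrightarrow> f \<in> gen_semigroup F"
| comp: "g \<in> gen_semigroup F \<Longrightarrow> h \<in> gen_semigroup F \<Longrightarrow> g \<circ> h \<in> gen_semigroup F"

definition G_semigroup :: "complex \<Rightarrow> real \<Rightarrow> (complex \<Rightarrow> complex) set" where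
  "G_semigroup c r = gen_semigroup {quad c' | c'. cmod (c' - c) \<le> r}"

definition invariant_compact :: "(complex \<Rightarrow> complex) set \<Rightarrow> complex set \<Rightarrow> bool" where
  "invariant_compact G L \<longleftrightarrow> L \<noteq> {} \<and> compact L \<and> (\<forall>g\<in>G. g ` L \<subseteq> L)"

text \<open>Planar minimal set (a minimal set of the semigroup on the Riemann sphere not containing
  infinity).  Since every subset of a planar set avoids infinity, minimality among all
  compact invariant subsets of the sphere reduces to minimality among planar ones.\<close>
definition planar_minimal_set :: "(complex \<Rightarrow> complex) set \<Rightarrow> complex set \<Rightarrow> bool" where
  "planar_minimal_set G L \<longleftrightarrow> invariant_compact G L \<and>
     (\<forall>K. K \<subseteq> L \<and> invariant_compact G K \<longrightarrow> K = L)"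

definition r_bif :: "complex \<Rightarrow> ereal" where
  "r_bif c = Sup (ereal ` {r. r \<ge> 0 \<and> (\<exists>L. planar_minimal_set (G_semigroup c r) L)})"

end

theory Submission
  imports Defs "HOL-Complex_Analysis.Complex_Analysis"
begin

(* If r exceeds the distance from c to the boundary of the Mandelbrot set, the parameter disc
   of G_{c,r} contains a small disc ball c' e of parameters outside the Mandelbrot set, and a
   compact set L invariant under G_{c,r} contains the e-ball around quad c' z for every z in L.
   The critical orbit of quad c' escapes and so avoids L; hence every iterate of quad c' has
   inverse branches on these balls, bounded by the escape radius, and Cauchy's estimate bounds
   the derivatives of the iterates from below on L. By Montel's theorem the iterates have a
   limit phi along a subsequence r k on the interior of L; phi has nonvanishing derivative and
   therefore open image, while a limit psi along the gaps r (k+1) - r k fixes that image.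
   By the identity theorem psi is the identity on a whole component of the interior of L, so
   this component contains the e-ball around each of its points and cannot be bounded. *)

lemma holomorphic_on_quad: "quad c holomorphic_on S"
  unfolding quad_def[abs_def] by (intro holomorphic_intros)

lemma holomorphic_on_funpow_quad: "(quad c ^^ n) holomorphic_on S"
proof (induction n)
  case 0
  then show ?case by (simp add: holomorphic_on_id)
next
  case (Suc n)
  then show ?case
    using holomorphic_on_compose[OF Suc.IH holomorphic_on_quad] by (simp add: o_def)
qed

lemma norm_quad_gt:
  assumes "R \<ge> 2" "norm c \<le> R" "norm z > R"
  shows "norm (quad c z) > norm z"
proof -
  have "norm z ^ 2 - norm c \<le> norm (quad c z)"
    unfolding quad_def using norm_diff_ineq[of "z\<^sup>2" c] by (simp add: norm_power)
  moreover have "norm z * norm z > 2 * norm z"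
    using assms by (intro mult_strict_right_mono) auto
  ultimately show ?thesis using assms by (simp add: power2_eq_square)
qed

lemma norm_funpow_quad_gt:
  assumes "R \<ge> 2" "norm c \<le> R" "norm z > R"
  shows "norm ((quad c ^^ n) z) > R"
proof (induction n)
  case 0
  then show ?case using assms by simp
next
  case (Suc n)
  then show ?case using norm_quad_gt[OF assms(1,2) Suc] by simp
qed

lemma norm_le_if_norm_funpow_quad_le:
  assumes "norm ((quad c ^^ n) z) \<le> R"
  shows "norm z \<le> max R (max 2 (norm c))"
proof (rule ccontr)
  assume "\<not> ?thesis"
  then have "norm ((quad c ^^ n) z) > max R (max 2 (norm c))"
    by (intro norm_funpow_quad_gt) auto
  with assms show False by simp
qed

lemma three_not_in_mandelbrot: "(3::complex) \<notin> mandelbrot"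
proof -
  have "\<exists>x::real. (quad 3 ^^ n) 0 = of_real x \<and> real n \<le> x" for n
  proof (induction n)
    case 0
    then show ?case by (intro exI[of _ 0]) simp
  next
    case (Suc n)
    then obtain x where x: "(quad 3 ^^ n) 0 = of_real x" "real n \<le> x" by auto
    have "x + 1 \<le> x\<^sup>2 + 3"
    proof (cases "x \<le> 2")
      case True
      then show ?thesis using x by (simp add: add_increasing)
    next
      case False
      then have "x \<le> x * x" by (intro mult_le_cancel_left1[THEN iffD2]) auto
      then show ?thesis by (simp add: power2_eq_square)
    qed
    moreover have "(quad 3 ^^ Suc n) 0 = of_real (x\<^sup>2 + 3)"
      using x(1) by (simp add: quad_def)
    ultimately show ?case using x by (intro exI[of _ "x\<^sup>2 + 3"]) simp
  qed
  then have "real n \<le> norm ((quad 3 ^^ n) 0)" for n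
    by (metis norm_of_real abs_ge_self order_trans)
  then have "filterlim (\<lambda>n. norm ((quad 3 ^^ n) (0::complex))) at_top sequentially"
    by (intro filterlim_at_top_mono[OF filterlim_real_sequentially]) auto
  then show ?thesis
    unfolding mandelbrot_def by (simp add: filterlim_at_infinity_conv_norm_at_top)
qed

lemma orbit_not_in_bounded_invariant:
  fixes f :: "'a::real_normed_vector \<Rightarrow> 'a"
  assumes "bounded L" "f ` L \<subseteq> L" "filterlim (\<lambda>n. (f ^^ n) x) at_infinity sequentially"
  shows "(f ^^ j) x \<notin> L"
proof
  assume j: "(f ^^ j) x \<in> L"
  obtain R where R: "\<And>z. z \<in> L \<Longrightarrow> norm z \<le> R"
    using assms(1) by (auto simp: bounded_iff)
  have "(f ^^ n) z \<in> L" if "z \<in> L" for n z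
    using that assms(2) by (induction n) auto
  from this[OF j] have bnd: "norm ((f ^^ (n + j)) x) \<le> R" for n
    using R by (simp add: funpow_add)
  from assms(3) have "\<forall>\<^sub>F n in sequentially. R + 1 \<le> norm ((f ^^ n) x)"
    by (simp add: filterlim_at_infinity_conv_norm_at_top filterlim_at_top)
  then obtain N where "\<And>n. n \<ge> N \<Longrightarrow> R + 1 \<le> norm ((f ^^ n) x)"
    by (auto simp: eventually_sequentially)
  from this[of "N + j"] bnd[of N] show False by simp
qed

lemma holomorphic_quad_lift:
  assumes "G holomorphic_on S" "contractible S" "\<And>y. y \<in> S \<Longrightarrow> G y \<noteq> c"
    and "v \<in> S" "G v = quad c a"
  obtains H where "H holomorphic_on S" "\<And>y. y \<in> S \<Longrightarrow> quad c (H y) = G y" "H v = a"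
proof -
  have "(\<lambda>y. G y - c) holomorphic_on S" by (intro holomorphic_intros assms(1))
  moreover have "\<And>y. y \<in> S \<Longrightarrow> G y - c \<noteq> 0" using assms(3) by simp
  ultimately obtain g where g: "g holomorphic_on S" "\<And>y. y \<in> S \<Longrightarrow> G y - c = g y ^ 2"
    using contractible_imp_holomorphic_sqrt[OF _ assms(2)] by blast
  have "g v ^ 2 = a ^ 2" using g(2)[OF assms(4)] assms(5) by (simp add: quad_def)
  then have "g v = a \<or> g v = - a" by (simp add: power2_eq_iff)
  then obtain s :: complex where s: "s\<^sup>2 = 1" "s * g v = a"
    by (metis mult_1 mult_minus1 minus_minus power_one power2_minus)
  show ?thesis
  proof (rule that[of "\<lambda>y. s * g y"])
    show "(\<lambda>y. s * g y) holomorphic_on S" by (intro holomorphic_intros g(1))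
    show "quad c (s * g y) = G y" if "y \<in> S" for y
      using g(2)[OF that] s(1) by (simp add: quad_def power_mult_distrib diff_eq_eq)
  qed (use s in auto)
qed

lemma inverse_branch_funpow_quad:
  assumes "contractible S" "v \<in> S" "(quad c ^^ n) u = v"
    and "\<And>k. k \<ge> 1 \<Longrightarrow> (quad c ^^ k) 0 \<notin> S"
  obtains H where "H holomorphic_on S" "\<And>y. y \<in> S \<Longrightarrow> (quad c ^^ n) (H y) = y" "H v = u"
proof -
  have "\<exists>H. H holomorphic_on S \<and> (\<forall>y\<in>S. (quad c ^^ n) (H y) = y) \<and> H v = u"
    using assms(3)
  proof (induction n arbitrary: u)
    case 0
    then show ?case by (intro exI[of _ id]) (auto simp: holomorphic_on_id)
  next
    case (Suc n)
    have "(quad c ^^ n) (quad c u) = v"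
      using Suc.prems by (simp add: funpow_Suc_right del: funpow.simps)
    then obtain G where G: "G holomorphic_on S" "\<And>y. y \<in> S \<Longrightarrow> (quad c ^^ n) (G y) = y"
      "G v = quad c u"
      using Suc.IH by blast
    have "G y \<noteq> c" if "y \<in> S" for y
    proof
      assume "G y = c"
      then have "(quad c ^^ Suc n) 0 = y"
        using G(2)[OF that] by (simp add: funpow_Suc_right quad_def del: funpow.simps)
      with that assms(4)[of "Suc n"] show False by simp
    qed
    then obtain H where "H holomorphic_on S" "\<And>y. y \<in> S \<Longrightarrow> quad c (H y) = G y" "H v = u"
      using holomorphic_quad_lift[OF G(1) assms(1) _ assms(2) G(3)] by blast
    then show ?case
      using G(2) by (intro exI[of _ H]) (auto simp: funpow_Suc_right simp del: funpow.simps)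
  qed
  then show ?thesis using that by blast
qed

lemma norm_deriv_ge_if_bounded_right_inverse:
  fixes F H :: "complex \<Rightarrow> complex"
  assumes "e > 0" "H holomorphic_on ball v e" "\<And>y. y \<in> ball v e \<Longrightarrow> norm (H y) \<le> M"
    and "\<And>y. y \<in> ball v e \<Longrightarrow> F (H y) = y" "F field_differentiable at (H v)"
  shows "e / (2 * M) \<le> norm (deriv F (H v))"
proof -
  have "cball v (e/2) \<subseteq> ball v e" using assms(1) by auto
  then have "norm ((deriv ^^ 1) H v) \<le> fact 1 * M / (e/2) ^ 1"
    using assms(1,3)
    by (intro Cauchy_inequality holomorphic_on_subset[OF assms(2)]
        continuous_on_subset[OF holomorphic_on_imp_continuous_on[OF assms(2)]])
       (auto simp: dist_norm)
  then have deriv_H: "norm (deriv H v) \<le> 2 * M / e" by (simp add: mult.commute)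
  have "(F \<circ> H has_field_derivative deriv F (H v) * deriv H v) (at v)"
    using assms(1) by (intro DERIV_chain field_differentiable_derivI[OF assms(5)]
        holomorphic_derivI[OF assms(2) open_ball]) simp
  then have "((\<lambda>y. y) has_field_derivative deriv F (H v) * deriv H v) (at v)"
    by (rule has_field_derivative_transform_within_open[where S = "ball v e"])
       (use assms(1,4) in auto)
  then have "deriv F (H v) * deriv H v = 1"
    using DERIV_ident DERIV_unique by blast
  then have "1 \<le> norm (deriv F (H v)) * (2 * M / e)"
    by (metis deriv_H mult_left_mono norm_ge_zero norm_mult norm_one)
  moreover have "M \<ge> 0"
    using assms(1) assms(3)[of v] by (simp add: order_trans[OF norm_ge_zero])
  ultimately show ?thesis using assms(1) by (cases "M = 0") (auto simp: field_simps)
qed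

lemma norm_deriv_funpow_quad_ge:
  assumes "e > 0" "ball ((quad c ^^ n) u) e \<subseteq> cball 0 R"
    and "\<And>k. k \<ge> 1 \<Longrightarrow> (quad c ^^ k) 0 \<notin> ball ((quad c ^^ n) u) e"
  shows "e / (2 * max R (max 2 (norm c))) \<le> norm (deriv (quad c ^^ n) u)"
proof -
  have "(quad c ^^ n) u \<in> ball ((quad c ^^ n) u) e" using assms(1) by simp
  then obtain H where H: "H holomorphic_on ball ((quad c ^^ n) u) e"
    "\<And>y. y \<in> ball ((quad c ^^ n) u) e \<Longrightarrow> (quad c ^^ n) (H y) = y" "H ((quad c ^^ n) u) = u"
    using inverse_branch_funpow_quad[OF convex_imp_contractible[OF convex_ball] _ refl assms(3)]
    by blast
  have "norm (H y) \<le> max R (max 2 (norm c))" if "y \<in> ball ((quad c ^^ n) u) e" for y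
  proof (rule norm_le_if_norm_funpow_quad_le)
    show "norm ((quad c ^^ n) (H y)) \<le> R" using H(2)[OF that] assms(2) that by auto
  qed
  then show ?thesis
    using norm_deriv_ge_if_bounded_right_inverse[OF assms(1) H(1) _ H(2)] H(3)
      holomorphic_on_imp_differentiable_at[OF holomorphic_on_funpow_quad open_UNIV] by auto
qed

lemma Montel_uniformly_bounded:
  fixes F :: "nat \<Rightarrow> complex \<Rightarrow> complex"
  assumes "open S" "\<And>n. F n holomorphic_on S" "\<And>n x. x \<in> S \<Longrightarrow> norm (F n x) \<le> B"
  obtains g r where "g holomorphic_on S" "strict_mono (r :: nat \<Rightarrow> nat)"
    "\<And>x. x \<in> S \<Longrightarrow> ((\<lambda>k. F (r k) x) \<longlongrightarrow> g x) sequentially"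
    "\<And>K. compact K \<Longrightarrow> K \<subseteq> S \<Longrightarrow> uniform_limit K (F \<circ> r) g sequentially"
proof (rule Montel[OF assms(1), of "range F" F])
  show "\<exists>B. \<forall>h\<in>range F. \<forall>z\<in>K. norm (h z) \<le> B" if "K \<subseteq> S" for K
    using that assms(3) by blast
qed (use assms(2) that in auto)

lemma norm_deriv_uniform_limit_ge:
  fixes F :: "nat \<Rightarrow> complex \<Rightarrow> complex"
  assumes "open S" "cball w \<rho> \<subseteq> S" "\<rho> > 0" "\<And>n. F n holomorphic_on S"
    and "uniform_limit (cball w \<rho>) F g sequentially"
    and "\<forall>\<^sub>F n in sequentially. \<delta> \<le> norm (deriv (F n) w)"
  shows "\<delta> \<le> norm (deriv g w)"
proof -
  have cont: "\<forall>\<^sub>F n in sequentially. continuous_on (cball w \<rho>) (F n) \<and>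
      (\<forall>x\<in>ball w \<rho>. (F n has_field_derivative deriv (F n) x) (at x))"
    using assms(1,2,4) ball_subset_cball
    by (intro always_eventually allI conjI ballI holomorphic_derivI[of _ S]
        holomorphic_on_imp_continuous_on holomorphic_on_subset[OF assms(4)]) auto
  then obtain g' where "\<And>x. x \<in> ball w \<rho> \<Longrightarrow>
      (g has_field_derivative g' x) (at x) \<and> ((\<lambda>n. deriv (F n) x) \<longlongrightarrow> g' x) sequentially"
    using has_complex_derivative_uniform_limit[OF cont assms(5) _ assms(3)] by auto
  then have "(g has_field_derivative g' w) (at w)" "((\<lambda>n. deriv (F n) w) \<longlongrightarrow> g' w) sequentially"
    using assms(3) by auto
  then show ?thesis
    using tendsto_lowerbound[OF tendsto_norm assms(6)] DERIV_imp_deriv by fastforce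
qed

lemma tendsto_uniform_limit_compose:
  fixes F :: "'i \<Rightarrow> 'a::metric_space \<Rightarrow> 'b::real_normed_vector"
  assumes "uniform_limit (cball p \<rho>) F g L" "\<rho> > 0" "isCont g p" "(a \<longlongrightarrow> p) L"
  shows "((\<lambda>k. F k (a k)) \<longlongrightarrow> g p) L"
proof -
  have near: "\<forall>\<^sub>F k in L. a k \<in> cball p \<rho>"
    using tendstoD[OF assms(4,2)] by eventually_elim (simp add: dist_commute)
  have "((\<lambda>k. F k (a k) - g (a k)) \<longlongrightarrow> 0) L"
  proof (rule tendstoI)
    fix \<epsilon> :: real
    assume "\<epsilon> > 0"
    from uniform_limitD[OF assms(1) this] near
    show "\<forall>\<^sub>F k in L. dist (F k (a k) - g (a k)) 0 < \<epsilon>"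
      by eventually_elim (simp add: dist_norm)
  qed
  moreover have "((\<lambda>k. g (a k)) \<longlongrightarrow> g p) L"
    using isCont_tendsto_compose[OF assms(3,4)] .
  ultimately show ?thesis using tendsto_add by fastforce
qed

lemma open_image_ball_if_deriv_nonzero:
  assumes "g holomorphic_on ball w \<rho>" "deriv g w \<noteq> 0"
  shows "open (g ` ball w \<rho>)"
proof (cases "\<rho> > 0")
  case True
  have "\<not> g constant_on ball w \<rho>"
  proof
    assume "g constant_on ball w \<rho>"
    then obtain a where a: "\<And>x. x \<in> ball w \<rho> \<Longrightarrow> a = g x" by (auto simp: constant_on_def)
    have "(g has_field_derivative 0) (at w)"
      by (rule has_field_derivative_transform_within_open[OF DERIV_const open_ball _ a])
         (use True in auto)
    with assms(2) show False by (simp add: DERIV_imp_deriv)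
  qed
  then show ?thesis
    by (rule open_mapping_thm[OF assms(1) open_ball connected_ball open_ball order_refl])
next
  case False
  then show ?thesis by (simp add: ball_empty)
qed

lemma funpow_gap_limit_fixes_limit:
  fixes f :: "'a::real_normed_vector \<Rightarrow> 'a"
  assumes "((\<lambda>k. (f ^^ r k) x) \<longlongrightarrow> p) sequentially" "strict_mono s"
    and "\<And>k. r (Suc k) = m k + r k"
    and "uniform_limit (cball p \<sigma>) (\<lambda>k. f ^^ m (s k)) \<psi> sequentially" "\<sigma> > 0" "isCont \<psi> p"
  shows "\<psi> p = p"
proof -
  have "(\<lambda>k. (f ^^ r (s k)) x) \<longlonglongrightarrow> p"
    using LIMSEQ_subseq_LIMSEQ[OF assms(1,2)] by (simp add: o_def)
  then have "(\<lambda>k. (f ^^ m (s k)) ((f ^^ r (s k)) x)) \<longlonglongrightarrow> \<psi> p"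
    by (rule tendsto_uniform_limit_compose[OF assms(4,5,6)])
  then have "(\<lambda>k. (f ^^ r (Suc (s k))) x) \<longlonglongrightarrow> \<psi> p"
    by (simp add: assms(3) funpow_add)
  moreover have "(\<lambda>k. (f ^^ r (Suc (s k))) x) \<longlonglongrightarrow> p"
    using LIMSEQ_subseq_LIMSEQ[OF assms(1), of "Suc \<circ> s"] assms(2)
    by (simp add: o_def strict_mono_def)
  ultimately show ?thesis by (rule LIMSEQ_unique)
qed

lemma iterates_limit_identity_on_open_set:
  fixes f :: "complex \<Rightarrow> complex"
  assumes \<Omega>: "open \<Omega>" "\<And>n. (f ^^ n) holomorphic_on \<Omega>" "\<And>n x. x \<in> \<Omega> \<Longrightarrow> norm ((f ^^ n) x) \<le> R"
    and K: "closed K" "K \<subseteq> \<Omega>" "\<And>n x. x \<in> \<Omega> \<Longrightarrow> n \<ge> 1 \<Longrightarrow> (f ^^ n) x \<in> K"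
    and w: "w \<in> \<Omega>" "\<delta> > 0" "\<And>n. n \<ge> 1 \<Longrightarrow> \<delta> \<le> norm (deriv (f ^^ n) w)"
  obtains \<psi> U where "\<psi> holomorphic_on \<Omega>" "\<psi> ` \<Omega> \<subseteq> K" "open U" "U \<noteq> {}" "U \<subseteq> \<Omega>"
    "\<And>y. y \<in> U \<Longrightarrow> \<psi> y = y"
proof -
  obtain \<rho> where \<rho>: "\<rho> > 0" "cball w \<rho> \<subseteq> \<Omega>" using open_contains_cball w(1) \<Omega>(1) by blast
  obtain \<phi> and r :: "nat \<Rightarrow> nat" where \<phi>: "\<phi> holomorphic_on \<Omega>" "strict_mono r"
      "\<And>x. x \<in> \<Omega> \<Longrightarrow> ((\<lambda>k. (f ^^ r k) x) \<longlongrightarrow> \<phi> x) sequentially"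
      "\<And>C. compact C \<Longrightarrow> C \<subseteq> \<Omega> \<Longrightarrow> uniform_limit C ((\<lambda>n. f ^^ n) \<circ> r) \<phi> sequentially"
    by (rule Montel_uniformly_bounded[OF \<Omega>(1), of "\<lambda>n. f ^^ n", OF \<Omega>(2) \<Omega>(3)]) (auto intro: that)
  have r_pos: "\<forall>\<^sub>F k in sequentially. r k \<ge> 1"
  proof (rule eventually_sequentiallyI)
    show "1 \<le> r k" if "1 \<le> k" for k using seq_suble[OF \<phi>(2), of k] that by simp
  qed
  have \<phi>_in_K: "\<phi> x \<in> K" if "x \<in> \<Omega>" for x
  proof (rule Lim_in_closed_set[OF K(1) _ _ \<phi>(3)[OF that]])
    show "\<forall>\<^sub>F k in sequentially. (f ^^ r k) x \<in> K"
      using r_pos by eventually_elim (rule K(3)[OF that])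
  qed simp
  have "\<delta> \<le> norm (deriv \<phi> w)"
  proof (rule norm_deriv_uniform_limit_ge[OF \<Omega>(1) \<rho>(2,1) _ \<phi>(4)[OF compact_cball \<rho>(2)]])
    show "\<forall>\<^sub>F k in sequentially. \<delta> \<le> norm (deriv (((\<lambda>n. f ^^ n) \<circ> r) k) w)"
      using r_pos by eventually_elim (simp add: w(3))
  qed (simp add: \<Omega>(2))
  moreover have "\<phi> holomorphic_on ball w \<rho>"
    using \<rho>(2) ball_subset_cball by (intro holomorphic_on_subset[OF \<phi>(1)]) blast
  ultimately have "open (\<phi> ` ball w \<rho>)"
    using w(2) by (intro open_image_ball_if_deriv_nonzero) auto
  define m where "m k = r (Suc k) - r k" for k
  have r_Suc: "r (Suc k) = m k + r k" and m_pos: "m k \<ge> 1" for k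
    using strict_monoD[OF \<phi>(2), of k "Suc k"] by (auto simp: m_def)
  obtain \<psi> and s :: "nat \<Rightarrow> nat" where \<psi>: "\<psi> holomorphic_on \<Omega>" "strict_mono s"
      "\<And>x. x \<in> \<Omega> \<Longrightarrow> ((\<lambda>k. (f ^^ m (s k)) x) \<longlongrightarrow> \<psi> x) sequentially"
      "\<And>C. compact C \<Longrightarrow> C \<subseteq> \<Omega> \<Longrightarrow> uniform_limit C ((\<lambda>n. f ^^ m n) \<circ> s) \<psi> sequentially"
    by (rule Montel_uniformly_bounded[OF \<Omega>(1), of "\<lambda>n. f ^^ m n", OF \<Omega>(2) \<Omega>(3)]) (auto intro: that)
  have \<psi>_in_K: "\<psi> x \<in> K" if "x \<in> \<Omega>" for x
    by (rule Lim_in_closed_set[OF K(1) _ _ \<psi>(3)[OF that]]) (use m_pos K(3)[OF that] in auto)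
  have "\<psi> y = y" if "y \<in> \<phi> ` ball w \<rho>" for y
  proof -
    obtain x where x: "x \<in> \<Omega>" "y = \<phi> x" using \<open>y \<in> \<phi> ` ball w \<rho>\<close> \<rho>(2) by force
    then have "y \<in> \<Omega>" using \<phi>_in_K K(2) by auto
    then obtain \<sigma> where \<sigma>: "\<sigma> > 0" "cball y \<sigma> \<subseteq> \<Omega>" using open_contains_cball \<Omega>(1) by blast
    have "isCont \<psi> y"
      using holomorphic_on_imp_continuous_on[OF \<psi>(1)] continuous_on_eq_continuous_at[OF \<Omega>(1)]
        \<open>y \<in> \<Omega>\<close> by blast
    moreover have "uniform_limit (cball y \<sigma>) (\<lambda>k. f ^^ m (s k)) \<psi> sequentially"
      using \<psi>(4)[OF compact_cball \<sigma>(2)] by (simp add: o_def)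
    ultimately show ?thesis
      using funpow_gap_limit_fixes_limit[OF \<phi>(3)[OF x(1)] \<psi>(2) r_Suc] \<sigma>(1) x(2) by blast
  qed
  moreover have "\<phi> ` ball w \<rho> \<subseteq> \<Omega>"
    using \<phi>_in_K K(2) \<rho>(2) ball_subset_cball by blast
  ultimately show ?thesis
    using that[OF \<psi>(1) _ \<open>open (\<phi> ` ball w \<rho>)\<close>] \<psi>_in_K \<rho>(1) by (simp add: image_subset_iff)
qed

lemma not_bounded_if_balls_subset:
  fixes V :: "'a::real_normed_algebra_1 set"
  assumes "e > 0" "z \<in> V" "\<And>y. y \<in> V \<Longrightarrow> ball y e \<subseteq> V"
  shows "\<not> bounded V"
proof
  assume "bounded V"
  then obtain R where R: "\<And>y. y \<in> V \<Longrightarrow> norm y \<le> R" by (auto simp: bounded_iff)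
  have step: "y + of_real (e/2) \<in> ball y e" for y :: 'a
    using assms(1) by (simp add: dist_norm)
  have shifted: "z + of_real (real k * (e/2)) \<in> V" for k
  proof (induction k)
    case 0
    then show ?case using assms(2) by simp
  next
    case (Suc k)
    have "real (Suc k) * (e/2) = real k * (e/2) + e/2" by (simp add: algebra_simps)
    then have "z + of_real (real (Suc k) * (e/2)) = (z + of_real (real k * (e/2))) + of_real (e/2)"
      by (simp only: of_real_add add.assoc)
    then show ?case using assms(3)[OF Suc] step by auto
  qed
  obtain k :: nat where k: "(R + norm z) / (e/2) < real k" using reals_Archimedean2 by blast
  define t where "t = real k * (e/2)"
  have "R + norm z < t" using k assms(1) by (simp add: t_def field_simps)
  moreover have "t \<le> norm (z + of_real t) + norm z"
    using norm_triangle_ineq4[of "z + of_real t" z] \<open>R + norm z < t\<close> by simp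
  ultimately show False using R[OF shifted[of k]] by (simp add: t_def)
qed

definition thickly_invariant :: "real \<Rightarrow> ('a::metric_space \<Rightarrow> 'a) \<Rightarrow> 'a set \<Rightarrow> bool" where
  "thickly_invariant e f L \<longleftrightarrow> (\<forall>z\<in>L. ball (f z) e \<subseteq> L)"

lemma thickly_invariant_funpow:
  assumes "thickly_invariant e f L" "e > 0" "z \<in> L"
  shows "(f ^^ n) z \<in> L" and "n \<ge> 1 \<Longrightarrow> ball ((f ^^ n) z) e \<subseteq> L"
proof -
  have f_L: "f y \<in> L" if "y \<in> L" for y
  proof -
    have "ball (f y) e \<subseteq> L" using assms(1) that by (simp add: thickly_invariant_def)
    then show ?thesis using assms(2) by auto
  qed
  show iterate: "(f ^^ k) z \<in> L" for k
    using assms(3) f_L by (induction k) auto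
  assume "n \<ge> 1"
  then have "(f ^^ n) z = f ((f ^^ (n - 1)) z)"
    by (metis Suc_diff_le diff_Suc_1 funpow.simps(2) o_apply)
  then show "ball ((f ^^ n) z) e \<subseteq> L"
    using assms(1) iterate by (simp add: thickly_invariant_def)
qed

lemma deriv_funpow_quad_bounded_below:
  assumes "c \<notin> mandelbrot" "e > 0" "compact L" "thickly_invariant e (quad c) L"
  obtains \<delta> where "\<delta> > 0" "\<And>z n. z \<in> L \<Longrightarrow> n \<ge> 1 \<Longrightarrow> \<delta> \<le> norm (deriv (quad c ^^ n) z)"
proof -
  obtain R where R: "\<And>z. z \<in> L \<Longrightarrow> norm z \<le> R"
    using compact_imp_bounded[OF assms(3)] by (auto simp: bounded_iff)
  let ?\<delta> = "e / (2 * max R (max 2 (norm c)))"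
  have "quad c ` L \<subseteq> L" using thickly_invariant_funpow(1)[OF assms(4,2), of _ 1] by auto
  then have critical_orbit: "(quad c ^^ k) 0 \<notin> L" for k
    using orbit_not_in_bounded_invariant[OF compact_imp_bounded[OF assms(3)]] assms(1)
    by (simp add: mandelbrot_def)
  have "?\<delta> \<le> norm (deriv (quad c ^^ n) z)" if "z \<in> L" "n \<ge> 1" for z n
  proof (rule norm_deriv_funpow_quad_ge[OF assms(2)])
    have "ball ((quad c ^^ n) z) e \<subseteq> L" by (rule thickly_invariant_funpow(2)[OF assms(4,2) that])
    then show "ball ((quad c ^^ n) z) e \<subseteq> cball 0 R" "(quad c ^^ k) 0 \<notin> ball ((quad c ^^ n) z) e"
      for k
      using R critical_orbit by auto
  qed
  moreover have "?\<delta> > 0" using assms(2) by simp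
  ultimately show ?thesis using that by blast
qed

lemma component_subset_image_if_identity_on_open:
  assumes "open \<Omega>" "\<psi> holomorphic_on \<Omega>" "\<psi> ` \<Omega> \<subseteq> K"
    and "open U" "U \<noteq> {}" "U \<subseteq> \<Omega>" "\<And>y. y \<in> U \<Longrightarrow> \<psi> y = y"
  obtains z where "z \<in> \<Omega>" "connected_component_set \<Omega> z \<subseteq> K"
proof -
  obtain z where "z \<in> U" using assms(5) by auto
  define V where "V = connected_component_set \<Omega> z"
  have "open V" "connected V" "z \<in> V" "V \<subseteq> \<Omega>"
    using \<open>z \<in> U\<close> assms(1,6)
    by (auto simp: V_def open_connected_component connected_component_subset)
  have "\<psi> y = y" if "y \<in> V" for y
  proof (rule analytic_continuation_open[of "U \<inter> V" V])
    show "\<psi> holomorphic_on V" using assms(2) \<open>V \<subseteq> \<Omega>\<close> by (rule holomorphic_on_subset)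
  qed (use assms(4,7) \<open>open V\<close> \<open>connected V\<close> \<open>z \<in> U\<close> \<open>z \<in> V\<close> that
       in \<open>auto intro: holomorphic_intros\<close>)
  then have "V \<subseteq> K" using assms(3) \<open>V \<subseteq> \<Omega>\<close> by force
  then show ?thesis using that \<open>z \<in> U\<close> assms(6) by (auto simp: V_def)
qed

lemma escaping_parameter_not_thickly_invariant:
  assumes "c \<notin> mandelbrot" "e > 0" "compact L" "L \<noteq> {}"
  shows "\<not> thickly_invariant e (quad c) L"
proof
  assume thick: "thickly_invariant e (quad c) L"
  let ?f = "quad c"
  obtain R where R: "\<And>z. z \<in> L \<Longrightarrow> norm z \<le> R"
    using compact_imp_bounded[OF assms(3)] by (auto simp: bounded_iff)
  obtain \<delta> where \<delta>: "\<delta> > 0" "\<And>z n. z \<in> L \<Longrightarrow> n \<ge> 1 \<Longrightarrow> \<delta> \<le> norm (deriv (?f ^^ n) z)"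
    using deriv_funpow_quad_bounded_below[OF assms(1-3) thick] by blast
  define \<Omega> where "\<Omega> = interior L"
  define K where "K = {y. ball y e \<subseteq> L}"
  have "K = (\<Inter>p\<in>-L. - ball p e)" by (auto simp: K_def dist_commute)
  then have "closed K" by (auto intro: closed_INT)
  have ball_\<Omega>: "ball y e \<subseteq> \<Omega>" if "y \<in> K" for y
    using that by (simp add: K_def \<Omega>_def interior_maximal)
  then have "K \<subseteq> \<Omega>" using assms(2) by fastforce
  have iterate_K: "(?f ^^ n) x \<in> K" if "x \<in> \<Omega>" "n \<ge> 1" for n x
    using thickly_invariant_funpow(2)[OF thick assms(2)] that interior_subset
    by (auto simp: K_def \<Omega>_def)
  obtain z0 where "z0 \<in> L" using assms(4) by auto
  then have "?f z0 \<in> K" "?f z0 \<in> L"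
    using thickly_invariant_funpow[OF thick assms(2), of z0 1] by (auto simp: K_def)
  obtain \<psi> U where \<psi>: "\<psi> holomorphic_on \<Omega>" "\<psi> ` \<Omega> \<subseteq> K"
    and U: "open U" "U \<noteq> {}" "U \<subseteq> \<Omega>" "\<And>y. y \<in> U \<Longrightarrow> \<psi> y = y"
  proof (rule iterates_limit_identity_on_open_set[of \<Omega> ?f R K "?f z0" \<delta>])
    show "norm ((?f ^^ n) x) \<le> R" if "x \<in> \<Omega>" for n x
      using R thickly_invariant_funpow(1)[OF thick assms(2)] that interior_subset[of L]
      unfolding \<Omega>_def by blast
    show "\<delta> \<le> norm (deriv (?f ^^ n) (?f z0))" if "n \<ge> 1" for n
      using \<delta>(2) \<open>?f z0 \<in> L\<close> that by blast
  qed (use holomorphic_on_funpow_quad \<open>closed K\<close> \<open>K \<subseteq> \<Omega>\<close> iterate_K \<open>?f z0 \<in> K\<close> \<delta>(1)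
       in \<open>auto simp: \<Omega>_def\<close>)
  obtain z1 where "z1 \<in> \<Omega>" and component_K: "connected_component_set \<Omega> z1 \<subseteq> K"
    using component_subset_image_if_identity_on_open[OF _ \<psi> U] by (auto simp: \<Omega>_def)
  define V where "V = connected_component_set \<Omega> z1"
  have "z1 \<in> V" "V \<subseteq> \<Omega>" "V \<subseteq> K"
    using \<open>z1 \<in> \<Omega>\<close> component_K by (auto simp: V_def connected_component_subset)
  have "ball y e \<subseteq> V" if "y \<in> V" for y
  proof -
    have "ball y e \<subseteq> connected_component_set \<Omega> y"
      using ball_\<Omega> \<open>V \<subseteq> K\<close> that assms(2) by (intro connected_component_maximal) auto
    also have "\<dots> = V"
      using that by (simp add: V_def connected_component_eq)
    finally show ?thesis .
  qed
  then have "\<not> bounded V" by (rule not_bounded_if_balls_subset[OF assms(2) \<open>z1 \<in> V\<close>])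
  moreover have "bounded V"
    using compact_imp_bounded[OF assms(3)] \<open>V \<subseteq> \<Omega>\<close> interior_subset
    by (auto simp: \<Omega>_def intro: bounded_subset)
  ultimately show False by contradiction
qed

lemma ball_outside_within_infdist_frontier:
  fixes S :: "'a::euclidean_space set"
  assumes "S \<noteq> UNIV" "infdist c (frontier S) < r"
  obtains y e where "e > 0" "y \<notin> S" "ball y e \<subseteq> ball c r"
proof (cases "frontier S = {}")
  case True
  then have "S = {}" using assms(1) by (simp add: frontier_eq_empty)
  then show ?thesis using that[of r c] assms(2) True by (simp add: infdist_def)
next
  case False
  obtain a where a: "a \<in> frontier S" "infdist c (frontier S) = dist c a"
    by (rule infdist_attains_inf[OF frontier_closed False])
  then have "a \<in> closure (- S)" by (simp add: frontier_closures)
  moreover have "r - dist c a > 0" using assms(2) a(2) by simp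
  ultimately obtain y where y: "y \<in> - S" "dist y a < r - dist c a"
    unfolding closure_approachable by blast
  then have "dist c y < r" using dist_triangle[of c y a] by (simp add: dist_commute)
  show ?thesis
  proof (rule that[of "r - dist c y" y])
    show "ball y (r - dist c y) \<subseteq> ball c r"
    proof
      fix x
      assume "x \<in> ball y (r - dist c y)"
      then show "x \<in> ball c r" using dist_triangle[of c x y] by simp
    qed
  qed (use y(1) \<open>dist c y < r\<close> in auto)
qed

lemma invariant_compact_imp_thickly_invariant:
  assumes "invariant_compact (G_semigroup c r) L" "ball c' e \<subseteq> cball c r"
  shows "thickly_invariant e (quad c') L"
  unfolding thickly_invariant_def
proof (intro ballI subsetI)
  fix z y
  assume "z \<in> L" "y \<in> ball (quad c' z) e"
  define c'' where "c'' = c' + (y - quad c' z)"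
  have "c'' \<in> ball c' e"
    using \<open>y \<in> ball (quad c' z) e\<close> by (simp add: c''_def dist_norm norm_minus_commute)
  then have "cmod (c'' - c) \<le> r" using assms(2) by (auto simp: dist_norm norm_minus_commute)
  then have "quad c'' \<in> G_semigroup c r"
    unfolding G_semigroup_def by (blast intro: gen_semigroup.gen)
  then have "quad c'' z \<in> L" using assms(1) \<open>z \<in> L\<close> by (auto simp: invariant_compact_def)
  then show "y \<in> L" by (simp add: c''_def quad_def)
qed

lemma not_invariant_compact_beyond_frontier:
  assumes "infdist c (frontier mandelbrot) < r"
  shows "\<not> invariant_compact (G_semigroup c r) L"
proof
  assume inv: "invariant_compact (G_semigroup c r) L"
  have "mandelbrot \<noteq> UNIV" using three_not_in_mandelbrot by auto
  then obtain c' e where "e > 0" "c' \<notin> mandelbrot" "ball c' e \<subseteq> ball c r"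
    using ball_outside_within_infdist_frontier assms by blast
  moreover have "thickly_invariant e (quad c') L"
    using invariant_compact_imp_thickly_invariant[OF inv] \<open>ball c' e \<subseteq> ball c r\<close>
      ball_subset_cball by blast
  moreover have "compact L" "L \<noteq> {}" using inv by (auto simp: invariant_compact_def)
  ultimately show False using escaping_parameter_not_thickly_invariant by blast
qed

theorem lemma4p9:
  fixes c :: complex
  shows "r_bif c \<le> ereal (infdist c (frontier mandelbrot))"
proof -
  have "r \<le> infdist c (frontier mandelbrot)" if "planar_minimal_set (G_semigroup c r) L" for r L
    using not_invariant_compact_beyond_frontier[of c r L] that
    by (force simp: planar_minimal_set_def)
  then show ?thesis unfolding r_bif_def by (intro Sup_least) auto
qed

end
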